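(* Let $\mathcal W=\{w\in\mathbb R^2:\|w\|_2=1\}$, parametrize $w=(\sin\phi,\cos\phi)$ with $\phi\in[0,2\pi)$, let $Z_1,\dots,Z_n$ be i.i.d. $\mathcal N(0,I_2)$, and let $\ell(w,z)=-\langle w,z\rangle$. Let $W$ be the empirical risk minimizer, i.e. $W=\bar Z/\|\bar Z\|_2$ where $\bar Z=\frac1n\sum_{i=1}^nZ_i$ (equivalently, the phase maximizing $\langle w,\bar Z\rangle$). Let $\xi$ be a random angle independent of $S$ that equals $0$ with probability $\epsilon\in[0,1]$ and is otherwise uniform on $(-\pi,\pi)$, and let $W'$ be the hypothesis whose phase is the phase of $W$ plus $\xi$ modulo $2\pi$. Then $\mathrm{gen}(\mu,P_{W|S})=\sqrt{\frac{\pi}{2n}}$ and $\mathrm{gen}(\mu,P_{W'|S})=\epsilon\sqrt{\frac{\pi}{2n}}$. Moreover $I(W;S)=\infty$, and for $\epsilon\in(0,1)$ also $I(W';S)=\infty$.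
   Context: Here $\mu=\mathcal N(0,I_2)$; the generalization error is $\mathrm{gen}(\mu,P_{W|S})=\mathbb E[L_\mu(W)-L_S(W)]$ with $L_\mu(w)=\mathbb E_{Z\sim\mu}\ell(w,Z)$ and $L_S(w)=\frac1n\sum_i\ell(w,Z_i)$. *)

theory Defs
  imports "HOL-Probability.Probability"
begin

definition mu2 :: "(real \<times> real) measure" where
  "mu2 = density lborel (\<lambda>z. ennreal (std_normal_density (fst z) * std_normal_density (snd z)))"

definition loss :: "real \<times> real \<Rightarrow> real \<times> real \<Rightarrow> real" where
  "loss w z = - inner w z"

definition pop_risk :: "real \<times> real \<Rightarrow> real" where
  "pop_risk w = (\<integral>z. loss w z \<partial>mu2)"

definition emp_risk :: "nat \<Rightarrow> (nat \<Rightarrow> real \<times> real) \<Rightarrow> real \<times> real \<Rightarrow> real" where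
  "emp_risk n s w = (\<Sum>i<n. loss w (s i)) / real n"

definition gen :: "'a measure \<Rightarrow> nat \<Rightarrow> ('a \<Rightarrow> nat \<Rightarrow> real \<times> real) \<Rightarrow> ('a \<Rightarrow> real \<times> real) \<Rightarrow> real" where
  "gen M n S W = (\<integral>\<omega>. pop_risk (W \<omega>) - emp_risk n (S \<omega>) (W \<omega>) \<partial>M)"

definition sample :: "(nat \<Rightarrow> 'a \<Rightarrow> real \<times> real) \<Rightarrow> nat \<Rightarrow> 'a \<Rightarrow> nat \<Rightarrow> real \<times> real" where
  "sample Z n \<omega> = restrict (\<lambda>i. Z i \<omega>) {..<n}"

definition sample_space :: "nat \<Rightarrow> (nat \<Rightarrow> real \<times> real) measure" where
  "sample_space n = PiM {..<n} (\<lambda>_. borel)"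

definition zbar :: "(nat \<Rightarrow> 'a \<Rightarrow> real \<times> real) \<Rightarrow> nat \<Rightarrow> 'a \<Rightarrow> real \<times> real" where
  "zbar Z n \<omega> = (1 / real n) *\<^sub>R (\<Sum>i<n. Z i \<omega>)"

definition erm :: "(nat \<Rightarrow> 'a \<Rightarrow> real \<times> real) \<Rightarrow> nat \<Rightarrow> 'a \<Rightarrow> real \<times> real" where
  "erm Z n \<omega> = (1 / norm (zbar Z n \<omega>)) *\<^sub>R zbar Z n \<omega>"

definition hyp :: "real \<Rightarrow> real \<times> real" where
  "hyp \<phi> = (sin \<phi>, cos \<phi>)"

definition phase :: "real \<times> real \<Rightarrow> real" where
  "phase w = (SOME \<phi>. 0 \<le> \<phi> \<and> \<phi> < 2 * pi \<and> hyp \<phi> = w)"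

definition mod2pi :: "real \<Rightarrow> real" where
  "mod2pi x = x - 2 * pi * of_int \<lfloor>x / (2 * pi)\<rfloor>"

definition perturbed :: "(nat \<Rightarrow> 'a \<Rightarrow> real \<times> real) \<Rightarrow> nat \<Rightarrow> ('a \<Rightarrow> real) \<Rightarrow> 'a \<Rightarrow> real \<times> real" where
  "perturbed Z n \<xi> \<omega> = hyp (mod2pi (phase (erm Z n \<omega>) + \<xi> \<omega>))"

text \<open>KL divergence D(P || Q) with values in [0, \<infinity>]: it is \<infinity> unless P \<ll> Q and the
  log-density is P-integrable (for probability measures its negative part is always integrable).\<close>
definition KL_ext :: "'b measure \<Rightarrow> 'b measure \<Rightarrow> ereal" where
  "KL_ext P Q = (if sets P = sets Q \<and> absolutely_continuous Q P
      \<and> integrable P (\<lambda>x. ln (enn2real (RN_deriv Q P x)))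
     then ereal (\<integral>x. ln (enn2real (RN_deriv Q P x)) \<partial>P) else \<infinity>)"

definition mutual_info :: "'a measure \<Rightarrow> 'b measure \<Rightarrow> ('a \<Rightarrow> 'b) \<Rightarrow> 'c measure \<Rightarrow> ('a \<Rightarrow> 'c) \<Rightarrow> ereal" where
  "mutual_info M MX X MY Y =
     KL_ext (distr M (MX \<Otimes>\<^sub>M MY) (\<lambda>\<omega>. (X \<omega>, Y \<omega>))) (distr M MX X \<Otimes>\<^sub>M distr M MY Y)"

end

theory Submission
  imports Defs
begin

text \<open>The loss is linear and \<open>Z\<close> has mean zero, so the population risk vanishes and the
  empirical risk of \<open>w\<close> is \<open>-\<langle>w, Zbar\<rangle>\<close>. The ERM therefore has generalization error
  \<open>E \<parallel>Zbar\<parallel>\<close>, and the perturbed hypothesis, whose phase is shifted by \<open>\<xi>\<close>, has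
  \<open>E [\<parallel>Zbar\<parallel> cos \<xi>] = E \<parallel>Zbar\<parallel> \<cdot> E [cos \<xi>]\<close> by independence. \<open>Zbar\<close> is an isotropic Gaussian
  with variance \<open>1/n\<close>, whose norm has mean \<open>sqrt (pi / (2 n))\<close>, and \<open>E [cos \<xi>] = \<epsilon>\<close> because
  cosine integrates to zero over a period.

  For the mutual information: on an event of positive probability (the whole space for the ERM,
  \<open>{\<xi> = 0}\<close> for the perturbed hypothesis) the hypothesis is a fixed function of the sample, so
  the joint law of hypothesis and sample charges the graph of that function. The graph is null
  for the product of the marginals, since every level set of \<open>Zbar / \<parallel>Zbar\<parallel>\<close> lies on a line
  and lines are null for a Gaussian. Hence the joint law is not absolutely continuous with respect
  to the product and the divergence is infinite.\<close>

section \<open>Isotropic Gaussian measures on the plane\<close>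

definition normal2_density :: "real \<Rightarrow> real \<times> real \<Rightarrow> real" where
  "normal2_density \<sigma> z = normal_density 0 \<sigma> (fst z) * normal_density 0 \<sigma> (snd z)"

definition normal2 :: "real \<Rightarrow> (real \<times> real) measure" where
  "normal2 \<sigma> = density lborel (\<lambda>z. ennreal (normal2_density \<sigma> z))"

lemma borel_measurable_fst_real_pair [measurable]: "(fst :: real \<times> real \<Rightarrow> real) \<in> borel_measurable borel"
  by (intro borel_measurable_continuous_onI continuous_intros)

lemma borel_measurable_snd_real_pair [measurable]: "(snd :: real \<times> real \<Rightarrow> real) \<in> borel_measurable borel"
  by (intro borel_measurable_continuous_onI continuous_intros)

lemma borel_measurable_normal2_density [measurable]: "normal2_density \<sigma> \<in> borel_measurable borel"
  unfolding normal2_density_def[abs_def] by measurable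

lemma normal2_density_nonneg: "0 \<le> normal2_density \<sigma> z"
  by (simp add: normal2_density_def)

lemma sets_normal2 [simp, measurable_cong]: "sets (normal2 \<sigma>) = sets borel"
  by (simp add: normal2_def)

lemma mu2_eq_normal2: "mu2 = normal2 1"
  by (simp add: mu2_def normal2_def normal2_density_def)

lemma normal2_eq_pair_measure:
  assumes "0 < \<sigma>"
  shows "normal2 \<sigma> = density lborel (normal_density 0 \<sigma>) \<Otimes>\<^sub>M density lborel (normal_density 0 \<sigma>)"
proof -
  interpret N: prob_space "density lborel (normal_density 0 \<sigma>)"
    using prob_space_normal_density[OF assms] .
  have "density lborel (normal_density 0 \<sigma>) \<Otimes>\<^sub>M density lborel (normal_density 0 \<sigma>)
     = density (lborel \<Otimes>\<^sub>M lborel)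
         (\<lambda>(x, y). ennreal (normal_density 0 \<sigma> x) * ennreal (normal_density 0 \<sigma> y))"
    by (rule pair_measure_density) (auto intro: sigma_finite_lborel N.sigma_finite_measure)
  then show ?thesis
    by (simp add: lborel_prod normal2_def normal2_density_def ennreal_mult case_prod_beta')
qed

lemma prob_space_normal2: "0 < \<sigma> \<Longrightarrow> prob_space (normal2 \<sigma>)"
  unfolding normal2_eq_pair_measure
  by (intro prob_space_pair prob_space_normal_density)

lemma integral_normal2_fst_snd:
  assumes "0 < \<sigma>"
  shows "(\<integral>z. fst z \<partial>normal2 \<sigma>) = 0" "(\<integral>z. snd z \<partial>normal2 \<sigma>) = 0"
proof -
  let ?N = "density lborel (normal_density 0 \<sigma>)"
  interpret N: prob_space ?N using prob_space_normal_density[OF assms] .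
  interpret NN: pair_prob_space ?N ?N ..
  have "(\<integral>z. fst z \<partial>(?N \<Otimes>\<^sub>M ?N)) = (\<integral>x. x \<partial>distr (?N \<Otimes>\<^sub>M ?N) ?N fst)"
    by (rule integral_distr[symmetric]) auto
  also have "\<dots> = 0"
    using integral_normal_moment_nz_1[OF assms, of 0]
    by (simp add: N.distr_pair_fst integral_density mult.commute)
  finally have fst: "(\<integral>z. fst z \<partial>(?N \<Otimes>\<^sub>M ?N)) = 0" .
  have "(\<integral>z. snd z \<partial>(?N \<Otimes>\<^sub>M ?N)) = (\<integral>z. snd z \<partial>distr (?N \<Otimes>\<^sub>M ?N) (?N \<Otimes>\<^sub>M ?N) (\<lambda>(x, y). (y, x)))"
    by (simp only: NN.distr_pair_swap[symmetric])
  also have "\<dots> = (\<integral>z. fst z \<partial>(?N \<Otimes>\<^sub>M ?N))"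
    by (subst integral_distr) (auto simp: case_prod_beta)
  finally show "(\<integral>z. fst z \<partial>normal2 \<sigma>) = 0" "(\<integral>z. snd z \<partial>normal2 \<sigma>) = 0"
    using fst by (simp_all add: normal2_eq_pair_measure[OF assms])
qed

lemma nn_integral_normal2_density_convolution:
  assumes "0 < \<sigma>" "0 < \<tau>"
  shows "(\<integral>\<^sup>+p. ennreal (normal2_density \<sigma> p * normal2_density \<tau> (z - p)) \<partial>lborel)
     = ennreal (normal2_density (sqrt (\<sigma>\<^sup>2 + \<tau>\<^sup>2)) z)"
proof -
  let ?n = "normal_density 0 \<sigma>" and ?m = "normal_density 0 \<tau>"
  have conv: "(\<integral>\<^sup>+y. ennreal (?n y * ?m (x - y)) \<partial>lborel) = ennreal (normal_density 0 (sqrt (\<sigma>\<^sup>2 + \<tau>\<^sup>2)) x)"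
    for x
    using fun_cong[OF conv_normal_density_zero_mean[of \<tau> \<sigma>], of x] assms
    by (simp add: mult.commute add.commute)
  have "(\<integral>\<^sup>+p. ennreal (normal2_density \<sigma> p * normal2_density \<tau> (z - p)) \<partial>lborel)
      = (\<integral>\<^sup>+x. \<integral>\<^sup>+y. ennreal (normal2_density \<sigma> (x, y) * normal2_density \<tau> (z - (x, y))) \<partial>lborel \<partial>lborel)"
    by (subst lborel_prod[symmetric], subst lborel.nn_integral_fst) (simp_all add: lborel_prod)
  also have "\<dots> = (\<integral>\<^sup>+x. ennreal (?n x * ?m (fst z - x)) * \<integral>\<^sup>+y. ennreal (?n y * ?m (snd z - y)) \<partial>lborel \<partial>lborel)"
    by (intro nn_integral_cong, subst nn_integral_cmult[symmetric])
       (auto simp: normal2_density_def ennreal_mult[symmetric] intro!: nn_integral_cong simp: ac_simps)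
  also have "\<dots> = (\<integral>\<^sup>+x. ennreal (?n x * ?m (fst z - x)) \<partial>lborel) * (\<integral>\<^sup>+y. ennreal (?n y * ?m (snd z - y)) \<partial>lborel)"
    by (rule nn_integral_multc) measurable
  also have "\<dots> = ennreal (normal2_density (sqrt (\<sigma>\<^sup>2 + \<tau>\<^sup>2)) z)"
    unfolding conv by (simp add: normal2_density_def ennreal_mult)
  finally show ?thesis .
qed

lemma normal2_convolution:
  assumes "0 < \<sigma>" "0 < \<tau>"
  shows "normal2 \<sigma> \<star> normal2 \<tau> = normal2 (sqrt (\<sigma>\<^sup>2 + \<tau>\<^sup>2))"
proof (rule measure_eqI)
  fix A assume "A \<in> sets (normal2 \<sigma> \<star> normal2 \<tau>)"
  then have A[measurable]: "A \<in> sets borel" by simp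
  interpret P1: prob_space "normal2 \<sigma>" using prob_space_normal2 assms by auto
  interpret P2: prob_space "normal2 \<tau>" using prob_space_normal2 assms by auto
  have shift: "(\<integral>\<^sup>+q. ennreal (normal2_density \<tau> q) * indicator A (p + q) \<partial>lborel)
      = (\<integral>\<^sup>+z. ennreal (normal2_density \<tau> (z - p)) * indicator A z \<partial>lborel)" for p
    by (subst lborel_distr_plus[symmetric, of p], subst nn_integral_distr) auto
  have "emeasure (normal2 \<sigma> \<star> normal2 \<tau>) A = (\<integral>\<^sup>+p. \<integral>\<^sup>+q. indicator A (p + q) \<partial>normal2 \<tau> \<partial>normal2 \<sigma>)"
    by (rule convolution_emeasure') (auto intro: P1.finite_measure_axioms P2.finite_measure_axioms)
  also have "\<dots> = (\<integral>\<^sup>+p. \<integral>\<^sup>+z. ennreal (normal2_density \<sigma> p) * (ennreal (normal2_density \<tau> (z - p)) * indicator A z) \<partial>lborel \<partial>lborel)"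
    unfolding normal2_def
    by (simp add: nn_integral_density shift nn_integral_cmult[symmetric])
  also have "\<dots> = (\<integral>\<^sup>+z. \<integral>\<^sup>+p. ennreal (normal2_density \<sigma> p) * (ennreal (normal2_density \<tau> (z - p)) * indicator A z) \<partial>lborel \<partial>lborel)"
    by (rule lborel_pair.Fubini') measurable
  also have "\<dots> = (\<integral>\<^sup>+z. ennreal (normal2_density (sqrt (\<sigma>\<^sup>2 + \<tau>\<^sup>2)) z) * indicator A z \<partial>lborel)"
  proof (intro nn_integral_cong)
    fix z :: "real \<times> real"
    have "(\<integral>\<^sup>+p. ennreal (normal2_density \<sigma> p) * (ennreal (normal2_density \<tau> (z - p)) * indicator A z) \<partial>lborel)
       = (\<integral>\<^sup>+p. ennreal (normal2_density \<sigma> p * normal2_density \<tau> (z - p)) \<partial>lborel) * indicator A z"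
      by (subst nn_integral_multc[symmetric]) (auto simp: ennreal_mult normal2_density_nonneg ac_simps)
    then show "(\<integral>\<^sup>+p. ennreal (normal2_density \<sigma> p) * (ennreal (normal2_density \<tau> (z - p)) * indicator A z) \<partial>lborel)
       = ennreal (normal2_density (sqrt (\<sigma>\<^sup>2 + \<tau>\<^sup>2)) z) * indicator A z"
      by (simp add: nn_integral_normal2_density_convolution[OF assms])
  qed
  also have "\<dots> = emeasure (normal2 (sqrt (\<sigma>\<^sup>2 + \<tau>\<^sup>2))) A"
    unfolding normal2_def by (simp add: emeasure_density)
  finally show "emeasure (normal2 \<sigma> \<star> normal2 \<tau>) A = emeasure (normal2 (sqrt (\<sigma>\<^sup>2 + \<tau>\<^sup>2))) A" .
qed simp

lemma (in prob_space) indep_var_sum: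
  fixes X :: "'i \<Rightarrow> 'a \<Rightarrow> 'b::{second_countable_topology, topological_comm_monoid_add}"
  assumes "finite I" "i \<notin> I" and "indep_vars (\<lambda>_. borel) X (insert i I)"
  shows "indep_var borel (X i) borel (\<lambda>\<omega>. \<Sum>j\<in>I. X j \<omega>)"
proof -
  have "indep_var
      borel ((\<lambda>f. f i) \<circ> (\<lambda>\<omega>. restrict (\<lambda>j. X j \<omega>) {i}))
      borel ((\<lambda>f. \<Sum>j\<in>I. f j) \<circ> (\<lambda>\<omega>. restrict (\<lambda>j. X j \<omega>) I))"
    using assms by (intro indep_var_compose[OF indep_var_restrict]) auto
  then show ?thesis
    by (simp add: comp_def cong: rev_conj_cong)
qed

lemma (in prob_space) distr_sum_iid_normal2:
  assumes X: "\<And>i. i < k \<Longrightarrow> X i \<in> borel_measurable M \<and> distr M borel (X i) = normal2 1"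
    and indep: "indep_vars (\<lambda>_. borel) X {..<k}" and "1 \<le> k"
  shows "distr M borel (\<lambda>\<omega>. \<Sum>i<k. X i \<omega>) = normal2 (sqrt (real k))"
  using assms(3,1,2)
proof (induction k rule: dec_induct)
  case base then show ?case by simp
next
  case (step k)
  have [measurable]: "X i \<in> borel_measurable M" if "i \<le> k" for i
    using step.prems(1) that by auto
  have IH: "distr M borel (\<lambda>\<omega>. \<Sum>i<k. X i \<omega>) = normal2 (sqrt (real k))"
    by (rule step.IH) (use step.prems in \<open>auto intro: indep_vars_subset\<close>)
  have "indep_var borel (X k) borel (\<lambda>\<omega>. \<Sum>i<k. X i \<omega>)"
    by (rule indep_var_sum) (auto intro: indep_vars_subset[OF step.prems(2)])
  then have "distr M borel (\<lambda>\<omega>. X k \<omega> + (\<Sum>i<k. X i \<omega>))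
      = (distr M borel (X k) \<star> distr M borel (\<lambda>\<omega>. \<Sum>i<k. X i \<omega>))"
    by (rule sum_indep_random_variable) auto
  also have "\<dots> = (normal2 1 \<star> normal2 (sqrt (real k)))"
    using step.prems(1) IH by simp
  also have "\<dots> = normal2 (sqrt (real (Suc k)))"
    using step.hyps by (subst normal2_convolution) auto
  finally show ?case by (simp add: add.commute)
qed
section \<open>The mean norm of a planar Gaussian\<close>

lemma nn_integral_lborel_even:
  fixes f :: "real \<Rightarrow> ennreal"
  assumes [measurable]: "f \<in> borel_measurable borel" and even: "\<And>x. f (- x) = f x"
  shows "(\<integral>\<^sup>+x. f x \<partial>lborel) = 2 * (\<integral>\<^sup>+x. f x * indicator {0<..} x \<partial>lborel)"
proof -
  have "(\<integral>\<^sup>+x. f x \<partial>lborel) = (\<integral>\<^sup>+x. f x * indicator {0<..} x + f x * indicator {..<0} x \<partial>lborel)"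
    by (intro nn_integral_cong_AE AE_I[where N="{0}"]) (auto split: split_indicator)
  also have "\<dots> = (\<integral>\<^sup>+x. f x * indicator {0<..} x \<partial>lborel) + (\<integral>\<^sup>+x. f x * indicator {..<0} x \<partial>lborel)"
    by (rule nn_integral_add) auto
  also have "(\<integral>\<^sup>+x. f x * indicator {..<0} x \<partial>lborel) = (\<integral>\<^sup>+x. f x * indicator {0<..} x \<partial>lborel)"
    by (subst lborel_distr_uminus[symmetric], subst nn_integral_distr)
       (auto simp: even intro!: nn_integral_cong split: split_indicator)
  finally show ?thesis by (simp add: mult_2)
qed

lemma nn_integral_Ioi_scale:
  fixes f :: "real \<Rightarrow> ennreal"
  assumes [measurable]: "f \<in> borel_measurable borel" and "0 < c"
  shows "(\<integral>\<^sup>+x. f x * indicator {0<..} x \<partial>lborel) = ennreal c * (\<integral>\<^sup>+s. f (c * s) * indicator {0<..} s \<partial>lborel)"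
proof -
  have "(\<integral>\<^sup>+x. f x * indicator {0<..} x \<partial>lborel)
      = ennreal \<bar>c\<bar> * (\<integral>\<^sup>+s. f (0 + c * s) * indicator {0<..} (0 + c * s) \<partial>lborel)"
    by (rule nn_integral_real_affine) (use assms in auto)
  moreover have "indicator {0<..} (c * s) = (indicator {0<..} s :: ennreal)" for s
    using assms by (simp add: indicator_def zero_less_mult_iff)
  ultimately show ?thesis using assms by simp
qed

lemma nn_integral_sq_exp_neg_sq:
  fixes a :: real assumes "0 < a"
  shows "(\<integral>\<^sup>+x. ennreal (x\<^sup>2 * exp (- a * x\<^sup>2)) * indicator {0<..} x \<partial>lborel) = ennreal (sqrt pi / (4 * a * sqrt a))"
proof -
  have hb: "has_bochner_integral lborel (\<lambda>x::real. indicator {0..} x *\<^sub>R (exp (-x\<^sup>2) * x ^ (2 * 1)))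
       ((sqrt pi / 2) * (fact (2 * 1) / (2 ^ (2 * 1) * fact 1)))"
    by (rule gaussian_moment_even_pos)
  have std: "(\<integral>\<^sup>+x. ennreal (x\<^sup>2 * exp (- x\<^sup>2)) * indicator {0<..} x \<partial>lborel) = ennreal (sqrt pi / 4)"
  proof -
    have "(\<integral>\<^sup>+x. ennreal (x\<^sup>2 * exp (- x\<^sup>2)) * indicator {0<..} x \<partial>lborel)
        = (\<integral>\<^sup>+x. ennreal (indicator {0..} x *\<^sub>R (exp (-x\<^sup>2) * x ^ (2 * 1))) \<partial>lborel)"
      by (intro nn_integral_cong_AE AE_I[where N="{0}"]) (auto split: split_indicator simp: mult.commute)
    also have "\<dots> = ennreal ((sqrt pi / 2) * (fact (2 * 1) / (2 ^ (2 * 1) * fact 1)))"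
      using integrable.intros[OF hb] has_bochner_integral_integral_eq[OF hb]
      by (subst nn_integral_eq_integral) (auto split: split_indicator)
    finally show ?thesis by simp
  qed
  define c where "c = 1 / sqrt a"
  have c: "0 < c" "a * c\<^sup>2 = 1" using assms by (simp_all add: c_def power_divide)
  have "ennreal ((c * s)\<^sup>2 * exp (- a * (c * s)\<^sup>2)) = ennreal (c\<^sup>2) * ennreal (s\<^sup>2 * exp (- s\<^sup>2))" for s
  proof -
    have "a * (c * s)\<^sup>2 = s\<^sup>2" using c by (simp add: power_mult_distrib mult.assoc[symmetric])
    then show ?thesis by (simp add: ennreal_mult[symmetric] power_mult_distrib)
  qed
  then have "(\<integral>\<^sup>+x. ennreal (x\<^sup>2 * exp (- a * x\<^sup>2)) * indicator {0<..} x \<partial>lborel)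
      = ennreal c * (\<integral>\<^sup>+s. ennreal (c\<^sup>2) * (ennreal (s\<^sup>2 * exp (- s\<^sup>2)) * indicator {0<..} s) \<partial>lborel)"
    using c by (subst nn_integral_Ioi_scale[of _ c]) (simp_all add: mult.assoc)
  also have "\<dots> = ennreal (c * c\<^sup>2 * (sqrt pi / 4))"
    using c by (subst nn_integral_cmult) (auto simp: std ennreal_mult[symmetric])
  also have "c * c\<^sup>2 * (sqrt pi / 4) = sqrt pi / (4 * a * sqrt a)"
    using assms by (simp add: c_def power_divide)
  finally show ?thesis .
qed

lemma nn_integral_inverse_1_plus_sq:
  "(\<integral>\<^sup>+s. ennreal (1 / (1 + s\<^sup>2)) * indicator {0<..} s \<partial>lborel) = ennreal (pi / 2)"
proof -
  have "(\<integral>\<^sup>+s. ennreal (1 / (1 + s\<^sup>2)) * indicator {0<..} s \<partial>lborel)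
      = (\<integral>\<^sup>+s. ennreal (1 / (1 + s\<^sup>2)) * indicator {0..} s \<partial>lborel)"
    by (intro nn_integral_cong_AE AE_I[where N="{0}"]) (auto split: split_indicator)
  also have "\<dots> = ennreal (pi / 2 - arctan 0)"
  proof (rule nn_integral_FTC_atLeast)
    show "((\<lambda>a. arctan a) \<longlongrightarrow> (pi / 2)) at_top"
      by (simp add: tendsto_arctan_at_top)
  qed (auto intro!: derivative_eq_intros simp: add_nonneg_eq_0_iff field_simps power2_eq_square)
  finally show ?thesis by simp
qed

lemma borel_measurable_nn_integral_lborel:
  assumes "(\<lambda>(x, y). f x y) \<in> borel_measurable (borel :: (real \<times> real) measure)"
  shows "(\<lambda>x. \<integral>\<^sup>+y. f x y \<partial>lborel) \<in> borel_measurable (borel :: real measure)"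
proof (rule lborel.borel_measurable_nn_integral)
  have sets: "sets (borel \<Otimes>\<^sub>M lborel) = sets (borel :: (real \<times> real) measure)"
    by (subst borel_prod[symmetric]) (rule sets_pair_measure_cong; simp)
  show "(\<lambda>(x, y). f x y) \<in> borel_measurable (borel \<Otimes>\<^sub>M lborel)"
    using assms by (simp add: measurable_cong_sets[OF sets refl])
qed

lemma nn_integral_radial_ray:
  fixes b x :: real assumes "0 < x"
  shows "(\<integral>\<^sup>+y. ennreal (exp (- b * (x\<^sup>2 + y\<^sup>2)) * sqrt (x\<^sup>2 + y\<^sup>2)) * indicator {0<..} y \<partial>lborel)
    = (\<integral>\<^sup>+s. ennreal (x\<^sup>2 * sqrt (1 + s\<^sup>2) * exp (- (b * (1 + s\<^sup>2)) * x\<^sup>2)) * indicator {0<..} s \<partial>lborel)"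
proof -
  have pointwise: "ennreal x * ennreal (exp (- b * (x\<^sup>2 + (x * s)\<^sup>2)) * sqrt (x\<^sup>2 + (x * s)\<^sup>2))
      = ennreal (x\<^sup>2 * sqrt (1 + s\<^sup>2) * exp (- (b * (1 + s\<^sup>2)) * x\<^sup>2))" for s
  proof -
    have sq: "x\<^sup>2 + (x * s)\<^sup>2 = x\<^sup>2 * (1 + s\<^sup>2)" by (simp add: algebra_simps power_mult_distrib)
    then have "sqrt (x\<^sup>2 + (x * s)\<^sup>2) = x * sqrt (1 + s\<^sup>2)"
      using assms by (simp add: real_sqrt_mult)
    then have "x * (exp (- b * (x\<^sup>2 + (x * s)\<^sup>2)) * sqrt (x\<^sup>2 + (x * s)\<^sup>2))
        = x\<^sup>2 * sqrt (1 + s\<^sup>2) * exp (- (b * (1 + s\<^sup>2)) * x\<^sup>2)"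
      by (simp add: sq algebra_simps power2_eq_square)
    moreover have "ennreal x * ennreal (exp (- b * (x\<^sup>2 + (x * s)\<^sup>2)) * sqrt (x\<^sup>2 + (x * s)\<^sup>2))
        = ennreal (x * (exp (- b * (x\<^sup>2 + (x * s)\<^sup>2)) * sqrt (x\<^sup>2 + (x * s)\<^sup>2)))"
      using assms by (intro ennreal_mult[symmetric]) auto
    ultimately show ?thesis
      by (simp only:)
  qed
  have "(\<integral>\<^sup>+y. ennreal (exp (- b * (x\<^sup>2 + y\<^sup>2)) * sqrt (x\<^sup>2 + y\<^sup>2)) * indicator {0<..} y \<partial>lborel)
      = ennreal x * (\<integral>\<^sup>+s. ennreal (exp (- b * (x\<^sup>2 + (x * s)\<^sup>2)) * sqrt (x\<^sup>2 + (x * s)\<^sup>2)) * indicator {0<..} s \<partial>lborel)"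
    by (rule nn_integral_Ioi_scale) (use assms in auto)
  also have "\<dots> = (\<integral>\<^sup>+s. ennreal x * ennreal (exp (- b * (x\<^sup>2 + (x * s)\<^sup>2)) * sqrt (x\<^sup>2 + (x * s)\<^sup>2)) * indicator {0<..} s \<partial>lborel)"
    by (subst nn_integral_cmult[symmetric]) (auto simp: mult.assoc)
  also have "\<dots> = (\<integral>\<^sup>+s. ennreal (x\<^sup>2 * sqrt (1 + s\<^sup>2) * exp (- (b * (1 + s\<^sup>2)) * x\<^sup>2)) * indicator {0<..} s \<partial>lborel)"
    by (simp only: pointwise)
  finally show ?thesis .
qed

lemma nn_integral_radial_fibre:
  fixes b s :: real assumes b: "0 < b"
  shows "(\<integral>\<^sup>+x. ennreal (x\<^sup>2 * sqrt (1 + s\<^sup>2) * exp (- (b * (1 + s\<^sup>2)) * x\<^sup>2)) * indicator {0<..} x \<partial>lborel)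
    = ennreal (sqrt pi / (4 * b * sqrt b)) * ennreal (1 / (1 + s\<^sup>2))"
proof -
  define q where "q = sqrt (1 + s\<^sup>2)"
  have q: "0 < q" "q\<^sup>2 = 1 + s\<^sup>2" by (simp_all add: q_def add_pos_nonneg)
  define a where "a = b * q\<^sup>2"
  have a: "0 < a" "sqrt a = sqrt b * q" unfolding a_def using b q(1) by (simp_all add: real_sqrt_mult)
  have "(\<integral>\<^sup>+x. ennreal (x\<^sup>2 * sqrt (1 + s\<^sup>2) * exp (- (b * (1 + s\<^sup>2)) * x\<^sup>2)) * indicator {0<..} x \<partial>lborel)
      = (\<integral>\<^sup>+x. ennreal q * (ennreal (x\<^sup>2 * exp (- a * x\<^sup>2)) * indicator {0<..} x) \<partial>lborel)"
    using q(1) by (auto simp: a_def q(2)[symmetric] q_def[symmetric] ennreal_mult mult_ac intro!: nn_integral_cong)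
  also have "\<dots> = ennreal q * (\<integral>\<^sup>+x. ennreal (x\<^sup>2 * exp (- a * x\<^sup>2)) * indicator {0<..} x \<partial>lborel)"
    by (rule nn_integral_cmult) measurable
  also have "\<dots> = ennreal (q * (sqrt pi / (4 * a * sqrt a)))"
    unfolding nn_integral_sq_exp_neg_sq[OF a(1)] using q(1) a(1) by (intro ennreal_mult[symmetric]) auto
  also have "q * (sqrt pi / (4 * a * sqrt a)) = sqrt pi / (4 * b * sqrt b) * (1 / (1 + s\<^sup>2))"
    unfolding a(2) unfolding a_def q(2)[symmetric] using q(1) b by (simp add: field_simps power2_eq_square)
  also have "ennreal (sqrt pi / (4 * b * sqrt b) * (1 / (1 + s\<^sup>2)))
      = ennreal (sqrt pi / (4 * b * sqrt b)) * ennreal (1 / (1 + s\<^sup>2))"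
    using b by (intro ennreal_mult) auto
  finally show ?thesis .
qed

lemma nn_integral_radial_gaussian:
  fixes b :: real assumes b: "0 < b"
  shows "(\<integral>\<^sup>+x. \<integral>\<^sup>+y. ennreal (exp (- b * (x\<^sup>2 + y\<^sup>2)) * sqrt (x\<^sup>2 + y\<^sup>2)) \<partial>lborel \<partial>lborel)
     = ennreal (pi * sqrt pi / (2 * b * sqrt b))"
proof -
  define G where "G x y = ennreal (exp (- b * (x\<^sup>2 + y\<^sup>2)) * sqrt (x\<^sup>2 + y\<^sup>2))" for x y :: real
  define H where "H x s = ennreal (x\<^sup>2 * sqrt (1 + s\<^sup>2) * exp (- (b * (1 + s\<^sup>2)) * x\<^sup>2))
      * indicator {0<..} x * indicator {0<..} s" for x s :: real
  define C where "C = sqrt pi / (4 * b * sqrt b)"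
  have C: "0 \<le> C" using b by (simp add: C_def)
  have [measurable]: "(\<lambda>(x, y). G x y) \<in> borel_measurable borel" "G x \<in> borel_measurable borel"
    "(\<lambda>(x, s). H x s) \<in> borel_measurable borel" for x
    unfolding G_def H_def by measurable
  have half_G: "(\<lambda>x. \<integral>\<^sup>+y. G x y * indicator {0<..} y \<partial>lborel) \<in> borel_measurable borel"
    by (rule borel_measurable_nn_integral_lborel) (simp add: G_def)
  have ray: "(\<integral>\<^sup>+y. G x y * indicator {0<..} y \<partial>lborel) * indicator {0<..} x = (\<integral>\<^sup>+s. H x s \<partial>lborel)" for x
  proof (cases "0 < x")
    case True
    then show ?thesis
      using nn_integral_radial_ray[OF True, of b] by (simp add: G_def H_def)
  qed (simp add: H_def)
  have fibre: "(\<integral>\<^sup>+x. H x s \<partial>lborel) = ennreal C * (ennreal (1 / (1 + s\<^sup>2)) * indicator {0<..} s)" for s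
  proof -
    have "(\<integral>\<^sup>+x. H x s \<partial>lborel) = indicator {0<..} s
        * (\<integral>\<^sup>+x. ennreal (x\<^sup>2 * sqrt (1 + s\<^sup>2) * exp (- (b * (1 + s\<^sup>2)) * x\<^sup>2)) * indicator {0<..} x \<partial>lborel)"
      by (subst nn_integral_cmult[symmetric]) (auto simp: H_def mult_ac)
    also have "\<dots> = indicator {0<..} s * (ennreal C * ennreal (1 / (1 + s\<^sup>2)))"
      by (simp only: nn_integral_radial_fibre[OF b, folded C_def])
    finally show ?thesis
      by (simp only: mult_ac)
  qed
  \<comment> \<open>Restrict to the quadrant by symmetry, then substitute \<open>y = x s\<close>: after Fubini the inner
      integral over \<open>x\<close> is a Gaussian moment and the outer one is an arctangent.\<close>
  have "(\<integral>\<^sup>+x. \<integral>\<^sup>+y. G x y \<partial>lborel \<partial>lborel)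
      = (\<integral>\<^sup>+x. 2 * (\<integral>\<^sup>+y. G x y * indicator {0<..} y \<partial>lborel) \<partial>lborel)"
    by (intro nn_integral_cong nn_integral_lborel_even) (auto simp: G_def)
  also have "\<dots> = 4 * (\<integral>\<^sup>+x. (\<integral>\<^sup>+y. G x y * indicator {0<..} y \<partial>lborel) * indicator {0<..} x \<partial>lborel)"
    using half_G
    by (subst nn_integral_lborel_even) (auto simp: G_def nn_integral_cmult mult.assoc)
  also have "\<dots> = 4 * (\<integral>\<^sup>+x. \<integral>\<^sup>+s. H x s \<partial>lborel \<partial>lborel)"
    by (simp only: ray)
  also have "\<dots> = 4 * (\<integral>\<^sup>+s. \<integral>\<^sup>+x. H x s \<partial>lborel \<partial>lborel)"
    by (subst lborel_pair.Fubini') (simp_all add: lborel_prod)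
  also have "\<dots> = 4 * (\<integral>\<^sup>+s. ennreal C * (ennreal (1 / (1 + s\<^sup>2)) * indicator {0<..} s) \<partial>lborel)"
    by (simp only: fibre)
  also have "\<dots> = 4 * (ennreal C * ennreal (pi / 2))"
    by (subst nn_integral_cmult) (auto simp: nn_integral_inverse_1_plus_sq)
  also have "\<dots> = ennreal (4 * (C * (pi / 2)))"
    using C by (simp add: ennreal_mult[symmetric] numeral_mult_ennreal)
  also have "4 * (C * (pi / 2)) = pi * sqrt pi / (2 * b * sqrt b)"
    using b by (simp add: C_def divide_simps)
  finally have "(\<integral>\<^sup>+x. \<integral>\<^sup>+y. G x y \<partial>lborel \<partial>lborel) = ennreal (pi * sqrt pi / (2 * b * sqrt b))" .
  then show ?thesis unfolding G_def .
qed

lemma nn_integral_normal2_norm: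
  assumes "0 < \<sigma>"
  shows "(\<integral>\<^sup>+z. ennreal (norm z) \<partial>normal2 \<sigma>) = ennreal (\<sigma> * sqrt (pi / 2))"
proof -
  define b where "b = 1 / (2 * \<sigma>\<^sup>2)"
  define C where "C = 1 / (2 * pi * \<sigma>\<^sup>2)"
  have b: "0 < b" and C: "0 < C" using assms by (simp_all add: b_def C_def)
  have pointwise: "normal2_density \<sigma> (x, y) * norm (x, y) = C * (exp (- b * (x\<^sup>2 + y\<^sup>2)) * sqrt (x\<^sup>2 + y\<^sup>2))"
    for x y
    using assms
    by (simp add: normal2_density_def normal_density_def C_def b_def norm_Pair mult_exp_exp
        real_sqrt_mult[symmetric] power2_eq_square field_simps)
  have radial_measurable:
    "(\<lambda>x. \<integral>\<^sup>+y. ennreal (exp (- b * (x\<^sup>2 + y\<^sup>2)) * sqrt (x\<^sup>2 + y\<^sup>2)) \<partial>lborel) \<in> borel_measurable borel"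
    by (rule borel_measurable_nn_integral_lborel) measurable
  have "(\<integral>\<^sup>+z. ennreal (norm z) \<partial>normal2 \<sigma>) = (\<integral>\<^sup>+z. ennreal (normal2_density \<sigma> z * norm z) \<partial>(lborel \<Otimes>\<^sub>M lborel))"
    unfolding normal2_def lborel_prod
    by (subst nn_integral_density) (auto simp: ennreal_mult normal2_density_nonneg)
  also have "\<dots> = (\<integral>\<^sup>+x. \<integral>\<^sup>+y. ennreal (normal2_density \<sigma> (x, y) * norm (x, y)) \<partial>lborel \<partial>lborel)"
    by (rule lborel.nn_integral_fst[symmetric]) (simp add: lborel_prod)
  also have "\<dots> = (\<integral>\<^sup>+x. ennreal C * \<integral>\<^sup>+y. ennreal (exp (- b * (x\<^sup>2 + y\<^sup>2)) * sqrt (x\<^sup>2 + y\<^sup>2)) \<partial>lborel \<partial>lborel)"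
    using C by (simp only: pointwise, subst nn_integral_cmult[symmetric])
      (auto intro!: nn_integral_cong simp: ennreal_mult)
  also have "\<dots> = ennreal C * ennreal (pi * sqrt pi / (2 * b * sqrt b))"
    using radial_measurable nn_integral_radial_gaussian[OF b] by (simp add: nn_integral_cmult)
  also have "\<dots> = ennreal (\<sigma> * sqrt (pi / 2))"
  proof -
    have sqrt_b: "sqrt b = 1 / (sqrt 2 * \<sigma>)" and sqrt_pi2: "sqrt (pi / 2) = sqrt pi / sqrt 2"
      using assms by (simp_all add: b_def real_sqrt_divide real_sqrt_mult)
    have "sqrt 2 * sqrt 2 = (2 :: real)" by simp
    then have "C * (pi * sqrt pi / (2 * b * sqrt b)) = \<sigma> * sqrt (pi / 2)"
      unfolding sqrt_b sqrt_pi2 using assms by (simp add: C_def b_def field_simps power2_eq_square)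
    then show ?thesis
      using b C by (simp add: ennreal_mult[symmetric])
  qed
  finally show ?thesis .
qed

lemma integral_normal2_norm:
  assumes "0 < \<sigma>"
  shows "integrable (normal2 \<sigma>) norm" "(\<integral>z. norm z \<partial>normal2 \<sigma>) = \<sigma> * sqrt (pi / 2)"
  using nn_integral_normal2_norm[OF assms] assms
  by (subst (asm) nn_integral_eq_integrable; simp)+

lemma null_sets_normal2_line:
  assumes "a \<noteq> 0"
  shows "{z :: real \<times> real. a \<bullet> z = 0} \<in> null_sets (normal2 \<sigma>)"
proof -
  have borel: "{z :: real \<times> real. a \<bullet> z = 0} \<in> sets borel"
    by (intro borel_closed closed_hyperplane)
  then have "{z :: real \<times> real. a \<bullet> z = 0} \<in> null_sets lborel"
    using negligible_hyperplane[of a 0] assms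
    by (simp add: negligible_iff_null_sets null_sets_completion_iff)
  then have "AE z in lborel. z \<notin> {z. a \<bullet> z = 0}"
    by (rule AE_not_in)
  then have "AE z in lborel. z \<in> {z. a \<bullet> z = 0} \<longrightarrow> ennreal (normal2_density \<sigma> z) = 0"
    by (rule eventually_mono) simp
  moreover have "(\<lambda>z. ennreal (normal2_density \<sigma> z)) \<in> borel_measurable lborel"
    using borel_measurable_normal2_density by simp
  ultimately show ?thesis
    unfolding normal2_def using borel by (simp add: null_sets_density_iff)
qed

section \<open>Risks and phases\<close>

lemma pop_risk_eq_0: "pop_risk w = 0"
proof -
  have "integrable (normal2 1) (\<lambda>z :: real \<times> real. z)"
    by (rule integrable_norm_cancel[OF integral_normal2_norm(1)[OF zero_less_one]]) (rule measurable_ident_sets, simp)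
  then have "integrable (normal2 1) fst" "integrable (normal2 1) snd"
    by (auto dest: integrable_fst integrable_snd)
  then show ?thesis
    using integral_normal2_fst_snd[of 1]
    by (simp add: pop_risk_def mu2_eq_normal2 loss_def inner_prod_def)
qed

lemma emp_risk_sample: "emp_risk n (sample Z n \<omega>) w = - inner w (zbar Z n \<omega>)"
  by (simp add: emp_risk_def zbar_def sample_def loss_def inner_sum_right sum_negf divide_inverse mult.commute)

lemma inner_normalize_self: "inner ((1 / norm v) *\<^sub>R v) v = norm v"
  by (cases "v = 0") (simp_all add: power2_norm_eq_inner[symmetric] power2_eq_square)

definition rotate :: "real \<Rightarrow> real \<times> real \<Rightarrow> real \<times> real" where
  "rotate t w = (fst w * cos t + snd w * sin t, snd w * cos t - fst w * sin t)"

lemma hyp_phase: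
  assumes "norm w = 1"
  shows "hyp (phase w) = w"
proof -
  have "(snd w)\<^sup>2 + (fst w)\<^sup>2 = 1"
    using assms by (cases w) (simp add: norm_Pair)
  then obtain t where "0 \<le> t" "t < 2 * pi" "snd w = cos t" "fst w = sin t"
    by (rule sincos_total_2pi)
  then have "\<exists>\<phi>. 0 \<le> \<phi> \<and> \<phi> < 2 * pi \<and> hyp \<phi> = w"
    by (auto simp: hyp_def prod_eq_iff)
  then show ?thesis unfolding phase_def by (rule someI2_ex) auto
qed

lemma hyp_mod2pi: "hyp (mod2pi x) = hyp x"
  by (simp add: hyp_def mod2pi_def sin_diff cos_diff)

lemma hyp_mod2pi_phase_add:
  assumes "norm w = 1"
  shows "hyp (mod2pi (phase w + t)) = rotate t w"
proof -
  have "sin (phase w) = fst w" "cos (phase w) = snd w"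
    using hyp_phase[OF assms] by (simp_all add: hyp_def prod_eq_iff)
  then show ?thesis
    by (simp only: hyp_mod2pi) (simp add: hyp_def rotate_def sin_add cos_add)
qed

lemma inner_rotate_normalize: "inner (rotate t ((1 / norm v) *\<^sub>R v)) v = norm v * cos t"
proof (cases "v = 0")
  case False
  have sq: "fst v * fst v + snd v * snd v = norm v * norm v"
    by (cases v) (simp add: norm_Pair power2_eq_square[symmetric])
  have "inner (rotate t ((1 / norm v) *\<^sub>R v)) v = (fst v * fst v + snd v * snd v) * cos t / norm v"
    by (simp add: rotate_def inner_prod_def algebra_simps add_divide_distrib)
  then show ?thesis
    using False by (simp add: sq)
qed (simp add: rotate_def)

section \<open>A point mass mixed with the uniform law on \<open>(-pi, pi)\<close>\<close>

lemma (in prob_space) density_distr_nonzero_point_uniform: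
  fixes \<xi> :: "'a \<Rightarrow> real"
  assumes [measurable]: "\<xi> \<in> borel_measurable M" and "\<epsilon> \<le> 1"
    and law: "\<forall>A \<in> sets borel. measure M {\<omega> \<in> space M. \<xi> \<omega> \<in> A}
      = \<epsilon> * indicator A 0 + (1 - \<epsilon>) * measure lborel (A \<inter> {-pi<..<pi}) / (2 * pi)"
  shows "density (distr M borel \<xi>) (\<lambda>x. ennreal (indicator (- {0}) x))
    = density lborel (\<lambda>x. ennreal ((1 - \<epsilon>) / (2 * pi) * indicator {-pi<..<pi} x))"
proof (rule measure_eqI)
  fix A :: "real set" assume "A \<in> sets (density (distr M borel \<xi>) (\<lambda>x. ennreal (indicator (- {0}) x)))"
  then have A[measurable]: "A \<in> sets borel" by simp
  let ?I = "{-pi<..<pi} :: real set"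
  have finite: "emeasure lborel (A \<inter> ?I) \<noteq> \<top>"
    using emeasure_mono[of "A \<inter> ?I" ?I lborel] by (auto simp: top_unique)
  have "emeasure (density (distr M borel \<xi>) (\<lambda>x. ennreal (indicator (- {0}) x))) A
      = (\<integral>\<^sup>+x. ennreal (indicator (- {0}) x) * indicator A x \<partial>distr M borel \<xi>)"
    by (rule emeasure_density) auto
  also have "\<dots> = (\<integral>\<^sup>+x. indicator (A - {0}) x \<partial>distr M borel \<xi>)"
    by (rule nn_integral_cong) (simp split: split_indicator)
  also have "\<dots> = emeasure (distr M borel \<xi>) (A - {0})"
    by (rule nn_integral_indicator) auto
  also have "\<dots> = ennreal (measure M {\<omega> \<in> space M. \<xi> \<omega> \<in> A - {0}})"
    by (subst emeasure_distr) (auto simp: emeasure_eq_measure vimage_def Int_def conj_commute)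
  also have "measure M {\<omega> \<in> space M. \<xi> \<omega> \<in> A - {0}} = (1 - \<epsilon>) / (2 * pi) * measure lborel (A \<inter> ?I)"
  proof -
    have "measure lborel ((A - {0}) \<inter> ?I) = measure lborel ((A \<inter> ?I) - {0})"
      by (rule arg_cong[where f = "measure lborel"]) auto
    also have "\<dots> = measure lborel (A \<inter> ?I)"
      by (rule measure_Diff_null_set) (auto simp: null_sets_def)
    finally have "measure lborel ((A - {0}) \<inter> ?I) = measure lborel (A \<inter> ?I)" .
    then show ?thesis using law[rule_format, of "A - {0}"] by simp
  qed
  also have "ennreal ((1 - \<epsilon>) / (2 * pi) * measure lborel (A \<inter> ?I))
      = ennreal ((1 - \<epsilon>) / (2 * pi)) * emeasure lborel (A \<inter> ?I)"
    unfolding emeasure_eq_ennreal_measure[OF finite] by (rule ennreal_mult) (use assms(2) in simp_all)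
  also have "\<dots> = (\<integral>\<^sup>+x. ennreal ((1 - \<epsilon>) / (2 * pi)) * indicator (A \<inter> ?I) x \<partial>lborel)"
    by (simp add: nn_integral_cmult)
  also have "\<dots> = emeasure (density lborel (\<lambda>x. ennreal ((1 - \<epsilon>) / (2 * pi) * indicator ?I x))) A"
    by (subst emeasure_density) (auto intro!: nn_integral_cong split: split_indicator)
  finally show "emeasure (density (distr M borel \<xi>) (\<lambda>x. ennreal (indicator (- {0}) x))) A
      = emeasure (density lborel (\<lambda>x. ennreal ((1 - \<epsilon>) / (2 * pi) * indicator ?I x))) A" .
qed simp

lemma (in prob_space) integral_point_uniform_mixture:
  fixes \<xi> :: "'a \<Rightarrow> real" and f :: "real \<Rightarrow> real"
  assumes [measurable]: "\<xi> \<in> borel_measurable M" "f \<in> borel_measurable borel"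
    and bounded: "\<And>x. \<bar>f x\<bar> \<le> B" and "\<epsilon> \<le> 1"
    and law: "\<forall>A \<in> sets borel. measure M {\<omega> \<in> space M. \<xi> \<omega> \<in> A}
      = \<epsilon> * indicator A 0 + (1 - \<epsilon>) * measure lborel (A \<inter> {-pi<..<pi}) / (2 * pi)"
  shows "(\<integral>\<omega>. f (\<xi> \<omega>) \<partial>M) = \<epsilon> * f 0 + (1 - \<epsilon>) / (2 * pi) * (\<integral>x. indicator {-pi<..<pi} x * f x \<partial>lborel)"
proof -
  let ?P = "distr M borel \<xi>"
  interpret P: prob_space ?P by (rule prob_space_distr) simp
  have "0 \<le> B" using bounded[of 0] by linarith
  have integrable: "integrable ?P (\<lambda>x. indicator S x * f x)" if "S \<in> sets borel" for S
    using that bounded \<open>0 \<le> B\<close> by (intro P.integrable_const_bound[where B = B]) (auto simp: abs_mult split: split_indicator)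
  have "(\<integral>\<omega>. f (\<xi> \<omega>) \<partial>M) = (\<integral>x. indicator {0} x * f x + indicator (- {0}) x * f x \<partial>?P)"
    by (subst integral_distr) (auto intro!: Bochner_Integration.integral_cong split: split_indicator)
  also have "\<dots> = (\<integral>x. indicator {0} x * f x \<partial>?P) + (\<integral>x. indicator (- {0}) x * f x \<partial>?P)"
    using integrable[of "{0}"] integrable[of "- {0}"] by (intro Bochner_Integration.integral_add) auto
  also have "(\<integral>x. indicator {0} x * f x \<partial>?P) = (\<integral>x. indicator {0} x * f 0 \<partial>?P)"
    by (intro Bochner_Integration.integral_cong) (auto split: split_indicator)
  also have "\<dots> = \<epsilon> * f 0"
  proof -
    have "{0} \<inter> {-pi<..<pi} = {0 :: real}" by auto
    then have "measure lborel ({0} \<inter> {-pi<..<pi}) = 0" by (simp add: measure_def)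
    then show ?thesis
      using law[rule_format, of "{0}"] by (simp add: measure_distr vimage_def Int_def conj_commute)
  qed
  also have "(\<integral>x. indicator (- {0}) x * f x \<partial>?P) = (\<integral>x. f x \<partial>density ?P (\<lambda>x. ennreal (indicator (- {0}) x)))"
    by (subst integral_density) auto
  also have "\<dots> = (1 - \<epsilon>) / (2 * pi) * (\<integral>x. indicator {-pi<..<pi} x * f x \<partial>lborel)"
    using assms(4)
    by (simp add: density_distr_nonzero_point_uniform[OF assms(1,4) law] integral_density mult.assoc)
  finally show ?thesis .
qed

lemma integral_cos_Ioo_pi: "(\<integral>x. indicator {-pi<..<pi} x * cos x \<partial>lborel) = 0"
proof -
  have "(\<integral>x. indicator {-pi<..<pi} x * cos x \<partial>lborel) = (\<integral>x. indicator {-pi..pi} x *\<^sub>R cos x \<partial>lborel)"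
  proof (rule integral_cong_AE)
    show "AE x in lborel. indicator {-pi<..<pi} x * cos x = indicator {-pi..pi} x *\<^sub>R cos x"
      using AE_lborel_singleton[of pi] AE_lborel_singleton[of "-pi"]
      by eventually_elim (auto split: split_indicator)
  qed auto
  also have "\<dots> = sin pi - sin (- pi)"
    by (rule integral_FTC_atLeastAtMost)
       (auto intro!: derivative_eq_intros continuous_intros
         simp: has_real_derivative_iff_has_vector_derivative[symmetric])
  finally show ?thesis by simp
qed

section \<open>Hypotheses that are functions of the sample\<close>

lemma KL_ext_eq_infinity:
  assumes "G \<in> null_sets Q" "G \<notin> null_sets P"
  shows "KL_ext P Q = \<infinity>"
  using assms unfolding KL_ext_def absolutely_continuous_def by auto

lemma null_sets_graph_pair_measure:
  fixes P :: "'b :: {second_countable_topology, t2_space} measure"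
  assumes sets_P: "sets P = sets borel" and "sigma_finite_measure Q"
    and [measurable]: "g \<in> borel_measurable Q"
    and atomless: "\<And>w. emeasure Q {s \<in> space Q. g s = w} = 0"
  shows "{p \<in> space (borel \<Otimes>\<^sub>M Q). fst p = g (snd p)} \<in> null_sets (P \<Otimes>\<^sub>M Q)"
proof -
  interpret Q: sigma_finite_measure Q by fact
  let ?G = "{p \<in> space (borel \<Otimes>\<^sub>M Q). fst p = g (snd p)}"
  have sets: "sets (P \<Otimes>\<^sub>M Q) = sets (borel \<Otimes>\<^sub>M Q)"
    by (rule sets_pair_measure_cong) (simp_all add: sets_P)
  have G: "?G \<in> sets (P \<Otimes>\<^sub>M Q)"
    unfolding sets by measurable
  have fibre: "Pair w -` ?G = {s \<in> space Q. g s = w}" for w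
    by (auto simp: space_pair_measure)
  have "emeasure (P \<Otimes>\<^sub>M Q) ?G = (\<integral>\<^sup>+w. emeasure Q (Pair w -` ?G) \<partial>P)"
    by (rule Q.emeasure_pair_measure_alt[OF G])
  also have "\<dots> = 0"
    by (simp only: fibre atomless) simp
  finally show ?thesis
    using G by (simp add: null_sets_def)
qed

lemma (in prob_space) mutual_info_eq_infinity_of_graph:
  fixes W :: "'a \<Rightarrow> 'b :: {second_countable_topology, t2_space}"
  assumes [measurable]: "W \<in> borel_measurable M" "X \<in> measurable M MX" "g \<in> borel_measurable MX"
    and E: "E \<in> sets M" "emeasure M E \<noteq> 0" "\<forall>\<omega>\<in>E. W \<omega> = g (X \<omega>)"
    and atomless: "\<And>w. emeasure M {\<omega> \<in> space M. g (X \<omega>) = w} = 0"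
  shows "mutual_info M borel W MX X = \<infinity>"
proof -
  let ?G = "{p \<in> space (borel \<Otimes>\<^sub>M MX). fst p = g (snd p)}"
  interpret PX: prob_space "distr M MX X" by (rule prob_space_distr) simp
  have "emeasure (distr M MX X) {s \<in> space MX. g s = w} = 0" for w
  proof -
    have "X -` {s \<in> space MX. g s = w} \<inter> space M = {\<omega> \<in> space M. g (X \<omega>) = w}"
      using measurable_space[OF assms(2)] by auto
    then show ?thesis
      by (simp add: emeasure_distr atomless)
  qed
  then have "{p \<in> space (borel \<Otimes>\<^sub>M distr M MX X). fst p = g (snd p)}
      \<in> null_sets (distr M borel W \<Otimes>\<^sub>M distr M MX X)"
    by (intro null_sets_graph_pair_measure) (auto intro: PX.sigma_finite_measure_axioms)
  then have "?G \<in> null_sets (distr M borel W \<Otimes>\<^sub>M distr M MX X)"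
    by (simp add: space_pair_measure)
  moreover have "?G \<notin> null_sets (distr M (borel \<Otimes>\<^sub>M MX) (\<lambda>\<omega>. (W \<omega>, X \<omega>)))"
  proof
    have G[measurable]: "?G \<in> sets (borel \<Otimes>\<^sub>M MX)" by measurable
    assume "?G \<in> null_sets (distr M (borel \<Otimes>\<^sub>M MX) (\<lambda>\<omega>. (W \<omega>, X \<omega>)))"
    then have "emeasure M ((\<lambda>\<omega>. (W \<omega>, X \<omega>)) -` ?G \<inter> space M) = 0"
      by (subst (asm) null_sets_distr_iff) (auto simp: null_sets_def)
    moreover have "E \<subseteq> (\<lambda>\<omega>. (W \<omega>, X \<omega>)) -` ?G \<inter> space M"
      using E sets.sets_into_space[OF E(1)] measurable_space[OF assms(2)]
      by (auto simp: space_pair_measure)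
    ultimately show False
      using E(2) emeasure_mono[of E "(\<lambda>\<omega>. (W \<omega>, X \<omega>)) -` ?G \<inter> space M" M] by simp
  qed
  ultimately show ?thesis
    unfolding mutual_info_def by (rule KL_ext_eq_infinity)
qed

section \<open>The Gaussian sample\<close>

definition sample_mean :: "nat \<Rightarrow> (nat \<Rightarrow> real \<times> real) \<Rightarrow> real \<times> real" where
  "sample_mean n s = (1 / real n) *\<^sub>R (\<Sum>i<n. s i)"

lemma zbar_eq_sample_mean: "zbar Z n \<omega> = sample_mean n (sample Z n \<omega>)"
  by (simp add: zbar_def sample_mean_def sample_def)

lemma borel_measurable_sample_mean [measurable]: "sample_mean n \<in> borel_measurable (sample_space n)"
  unfolding sample_mean_def[abs_def] sample_space_def
  by (intro borel_measurable_scaleR borel_measurable_const borel_measurable_sum measurable_component_singleton) auto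

definition erm_of_sample :: "nat \<Rightarrow> (nat \<Rightarrow> real \<times> real) \<Rightarrow> real \<times> real" where
  "erm_of_sample n s = (1 / norm (sample_mean n s)) *\<^sub>R sample_mean n s"

lemma erm_eq_erm_of_sample: "erm Z n \<omega> = erm_of_sample n (sample Z n \<omega>)"
  by (simp add: erm_def erm_of_sample_def zbar_eq_sample_mean)

lemma borel_measurable_erm_of_sample [measurable]: "erm_of_sample n \<in> borel_measurable (sample_space n)"
  unfolding erm_of_sample_def[abs_def] by measurable

lemma zbar_eq_norm_scaleR_erm: "zbar Z n \<omega> = norm (zbar Z n \<omega>) *\<^sub>R erm Z n \<omega>"
  by (cases "zbar Z n \<omega> = 0") (simp_all add: erm_def)

lemma orthogonal_nonzero_exists: "\<exists>a :: real \<times> real. a \<noteq> 0 \<and> a \<bullet> w = 0"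
  by (rule exI[of _ "if w = 0 then (1, 0) else (- snd w, fst w)"])
     (auto simp: inner_prod_def prod_eq_iff)

lemma (in prob_space) indep_var_of_product_distr:
  fixes f :: "'b \<Rightarrow> real" and h :: "'c \<Rightarrow> real"
  assumes [measurable]: "X \<in> measurable M MX" "Y \<in> measurable M MY"
    and product: "distr M (MX \<Otimes>\<^sub>M MY) (\<lambda>\<omega>. (X \<omega>, Y \<omega>)) = distr M MX X \<Otimes>\<^sub>M distr M MY Y"
    and [measurable]: "f \<in> borel_measurable MX" "h \<in> borel_measurable MY"
  shows "indep_var borel (\<lambda>\<omega>. f (X \<omega>)) borel (\<lambda>\<omega>. h (Y \<omega>))"
proof -
  interpret PY: prob_space "distr (distr M MY Y) borel h"
    by (intro prob_space.prob_space_distr prob_space_distr) auto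
  have "distr M (borel \<Otimes>\<^sub>M borel) (\<lambda>\<omega>. (f (X \<omega>), h (Y \<omega>)))
      = distr (distr M (MX \<Otimes>\<^sub>M MY) (\<lambda>\<omega>. (X \<omega>, Y \<omega>))) (borel \<Otimes>\<^sub>M borel) (\<lambda>(x, y). (f x, h y))"
    by (subst distr_distr) (auto simp: comp_def)
  also have "\<dots> = distr (distr M MX X) borel f \<Otimes>\<^sub>M distr (distr M MY Y) borel h"
    unfolding product by (rule pair_measure_distr[symmetric]) (auto intro: PY.sigma_finite_measure)
  also have "\<dots> = distr M borel (\<lambda>\<omega>. f (X \<omega>)) \<Otimes>\<^sub>M distr M borel (\<lambda>\<omega>. h (Y \<omega>))"
    by (simp add: distr_distr comp_def)
  finally show ?thesis
    by (subst indep_var_distribution_eq) auto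
qed

locale gaussian_sample = prob_space +
  fixes Z :: "nat \<Rightarrow> 'a \<Rightarrow> real \<times> real" and n :: nat
  assumes n_ge_1: "1 \<le> n"
    and Z_law: "\<forall>i<n. Z i \<in> borel_measurable M \<and> distr M borel (Z i) = mu2"
    and Z_indep: "indep_vars (\<lambda>_. borel) Z {..<n}"
begin

lemma borel_measurable_Z [measurable]: "i < n \<Longrightarrow> Z i \<in> borel_measurable M"
  using Z_law by auto

lemma measurable_sample [measurable]: "sample Z n \<in> measurable M (sample_space n)"
  unfolding sample_def[abs_def] sample_space_def by (intro measurable_restrict) auto

lemma borel_measurable_zbar [measurable]: "zbar Z n \<in> borel_measurable M"
  by (simp add: zbar_eq_sample_mean[abs_def])

lemma borel_measurable_erm [measurable]: "erm Z n \<in> borel_measurable M"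
  unfolding erm_def[abs_def] by measurable

lemma distr_sum_Z: "distr M borel (\<lambda>\<omega>. \<Sum>i<n. Z i \<omega>) = normal2 (sqrt (real n))"
  using Z_law Z_indep n_ge_1 by (intro distr_sum_iid_normal2) (auto simp: mu2_eq_normal2)

lemma integral_norm_zbar:
  "integrable M (\<lambda>\<omega>. norm (zbar Z n \<omega>))" "(\<integral>\<omega>. norm (zbar Z n \<omega>) \<partial>M) = sqrt (pi / (2 * real n))"
proof -
  have n: "0 < real n" using n_ge_1 by simp
  have norm_zbar: "norm (zbar Z n \<omega>) = norm (\<Sum>i<n. Z i \<omega>) / real n" for \<omega>
    using n by (simp add: zbar_def)
  have sum[measurable]: "(\<lambda>\<omega>. \<Sum>i<n. Z i \<omega>) \<in> borel_measurable M" by measurable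
  have "integrable (distr M borel (\<lambda>\<omega>. \<Sum>i<n. Z i \<omega>)) norm"
    using integral_normal2_norm(1)[of "sqrt (real n)"] n by (simp add: distr_sum_Z)
  then have "integrable M (\<lambda>\<omega>. norm (\<Sum>i<n. Z i \<omega>))"
    by (subst (asm) integrable_distr_eq) auto
  then show "integrable M (\<lambda>\<omega>. norm (zbar Z n \<omega>))"
    by (simp add: norm_zbar)
  have "(\<integral>\<omega>. norm (\<Sum>i<n. Z i \<omega>) \<partial>M) = (\<integral>z. norm z \<partial>distr M borel (\<lambda>\<omega>. \<Sum>i<n. Z i \<omega>))"
    by (rule integral_distr[symmetric]) auto
  also have "\<dots> = sqrt (real n) * sqrt (pi / 2)"
    using integral_normal2_norm(2)[of "sqrt (real n)"] n by (simp add: distr_sum_Z)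
  finally have "(\<integral>\<omega>. norm (\<Sum>i<n. Z i \<omega>) \<partial>M) = sqrt (real n) * sqrt (pi / 2)" .
  then show "(\<integral>\<omega>. norm (zbar Z n \<omega>) \<partial>M) = sqrt (pi / (2 * real n))"
    using n by (simp add: norm_zbar real_sqrt_divide real_sqrt_mult field_simps)
qed

lemma gen_erm: "gen M n (sample Z n) (erm Z n) = sqrt (pi / (2 * real n))"
  unfolding gen_def pop_risk_eq_0 emp_risk_sample erm_def inner_normalize_self
  by (simp add: integral_norm_zbar)

lemma emeasure_erm_eq: "emeasure M {\<omega> \<in> space M. erm Z n \<omega> = w} = 0"
proof -
  obtain a :: "real \<times> real" where a: "a \<noteq> 0" "a \<bullet> w = 0"
    using orthogonal_nonzero_exists by blast
  let ?L = "{z :: real \<times> real. a \<bullet> z = 0}"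
  have L[measurable]: "?L \<in> sets borel"
    by (intro borel_closed closed_hyperplane)
  have sub: "{\<omega> \<in> space M. erm Z n \<omega> = w} \<subseteq> (\<lambda>\<omega>. \<Sum>i<n. Z i \<omega>) -` ?L \<inter> space M"
  proof
    fix \<omega> assume \<omega>: "\<omega> \<in> {\<omega> \<in> space M. erm Z n \<omega> = w}"
    then have "a \<bullet> zbar Z n \<omega> = 0"
      using a(2) zbar_eq_norm_scaleR_erm[of Z n \<omega>] by (metis (mono_tags) inner_scaleR_right mem_Collect_eq mult_zero_right)
    moreover have "(\<Sum>i<n. Z i \<omega>) = real n *\<^sub>R zbar Z n \<omega>"
      using n_ge_1 by (simp add: zbar_def)
    ultimately show "\<omega> \<in> (\<lambda>\<omega>. \<Sum>i<n. Z i \<omega>) -` ?L \<inter> space M"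
      using \<omega> by simp
  qed
  have null: "emeasure M ((\<lambda>\<omega>. \<Sum>i<n. Z i \<omega>) -` ?L \<inter> space M) = 0"
    using null_sets_normal2_line[OF a(1), of "sqrt (real n)"]
    by (subst emeasure_distr[where N = borel, symmetric]) (auto simp: distr_sum_Z)
  show ?thesis
    by (rule emeasure_eq_0[OF _ null sub]) measurable
qed

lemma mutual_info_erm: "mutual_info M borel (erm Z n) (sample_space n) (sample Z n) = \<infinity>"
  using emeasure_erm_eq emeasure_space_1
  by (intro mutual_info_eq_infinity_of_graph[where g = "erm_of_sample n" and E = "space M"])
     (simp_all add: erm_eq_erm_of_sample)

end

locale perturbed_sample = gaussian_sample +
  fixes \<xi> :: "'a \<Rightarrow> real" and \<epsilon> :: real
  assumes borel_measurable_\<xi> [measurable]: "\<xi> \<in> borel_measurable M"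
    and sample_\<xi>_product: "distr M (sample_space n \<Otimes>\<^sub>M borel) (\<lambda>\<omega>. (sample Z n \<omega>, \<xi> \<omega>))
      = distr M (sample_space n) (sample Z n) \<Otimes>\<^sub>M distr M borel \<xi>"
    and \<epsilon>_le_1: "\<epsilon> \<le> 1"
    and \<xi>_law: "\<forall>A \<in> sets borel. measure M {\<omega> \<in> space M. \<xi> \<omega> \<in> A}
      = \<epsilon> * indicator A 0 + (1 - \<epsilon>) * measure lborel (A \<inter> {-pi<..<pi}) / (2 * pi)"
begin

text \<open>If \<open>Zbar = 0\<close> the ERM is \<open>0\<close>, whose phase is an unspecified value.\<close>

lemma perturbed_eq_rotate:
  "perturbed Z n \<xi> \<omega> =
    (if zbar Z n \<omega> = 0 then hyp (phase 0 + \<xi> \<omega>) else rotate (\<xi> \<omega>) (erm Z n \<omega>))"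
proof (cases "zbar Z n \<omega> = 0")
  case False
  then have "norm (erm Z n \<omega>) = 1" by (simp add: erm_def)
  then show ?thesis using False by (simp add: perturbed_def hyp_mod2pi_phase_add)
qed (simp add: perturbed_def hyp_mod2pi erm_def)

lemma borel_measurable_perturbed [measurable]: "perturbed Z n \<xi> \<in> borel_measurable M"
  unfolding perturbed_eq_rotate[abs_def] rotate_def hyp_def by measurable

lemma inner_perturbed_zbar: "inner (perturbed Z n \<xi> \<omega>) (zbar Z n \<omega>) = norm (zbar Z n \<omega>) * cos (\<xi> \<omega>)"
  by (cases "zbar Z n \<omega> = 0") (simp_all add: perturbed_eq_rotate erm_def inner_rotate_normalize)

lemma indep_var_norm_zbar_cos_\<xi>: "indep_var borel (\<lambda>\<omega>. norm (zbar Z n \<omega>)) borel (\<lambda>\<omega>. cos (\<xi> \<omega>))"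
  using indep_var_of_product_distr[OF measurable_sample borel_measurable_\<xi> sample_\<xi>_product,
      of "\<lambda>s. norm (sample_mean n s)" cos]
  by (simp add: zbar_eq_sample_mean)

lemma integral_cos_\<xi>: "(\<integral>\<omega>. cos (\<xi> \<omega>) \<partial>M) = \<epsilon>"
  using integral_point_uniform_mixture[OF borel_measurable_\<xi> _ _ \<epsilon>_le_1 \<xi>_law, of cos 1]
  by (simp add: integral_cos_Ioo_pi)

lemma gen_perturbed: "gen M n (sample Z n) (perturbed Z n \<xi>) = \<epsilon> * sqrt (pi / (2 * real n))"
proof -
  have "gen M n (sample Z n) (perturbed Z n \<xi>) = (\<integral>\<omega>. norm (zbar Z n \<omega>) * cos (\<xi> \<omega>) \<partial>M)"
    by (simp add: gen_def pop_risk_eq_0 emp_risk_sample inner_perturbed_zbar)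
  also have "\<dots> = (\<integral>\<omega>. norm (zbar Z n \<omega>) \<partial>M) * (\<integral>\<omega>. cos (\<xi> \<omega>) \<partial>M)"
    by (rule indep_var_lebesgue_integral[OF indep_var_norm_zbar_cos_\<xi> integral_norm_zbar(1)])
       (rule integrable_const_bound[where B = 1]; simp)
  finally show ?thesis
    by (simp add: integral_norm_zbar(2) integral_cos_\<xi>)
qed

lemma mutual_info_perturbed:
  assumes "0 < \<epsilon>"
  shows "mutual_info M borel (perturbed Z n \<xi>) (sample_space n) (sample Z n) = \<infinity>"
proof -
  \<comment> \<open>Off the null event \<open>Zbar = 0\<close>, \<open>\<xi> = 0\<close> makes the perturbed hypothesis equal to the ERM.\<close>
  let ?E = "{\<omega> \<in> space M. \<xi> \<omega> = 0} - {\<omega> \<in> space M. erm Z n \<omega> = 0}"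
  have "emeasure M ?E = emeasure M {\<omega> \<in> space M. \<xi> \<omega> = 0}"
    using emeasure_erm_eq[of 0] by (intro emeasure_Diff_null_set) (auto simp: null_sets_def)
  also have "\<dots> = \<epsilon>"
    using \<xi>_law[rule_format, of "{0}"] by (simp add: emeasure_eq_measure)
  finally have E_pos: "emeasure M ?E \<noteq> 0"
    using assms by simp
  have E: "?E \<in> sets M"
    by measurable
  have on_E: "\<forall>\<omega>\<in>?E. perturbed Z n \<xi> \<omega> = erm_of_sample n (sample Z n \<omega>)"
  proof
    fix \<omega> assume "\<omega> \<in> ?E"
    then have "\<xi> \<omega> = 0" "zbar Z n \<omega> \<noteq> 0" by (auto simp: erm_def)
    then show "perturbed Z n \<xi> \<omega> = erm_of_sample n (sample Z n \<omega>)"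
      by (simp add: perturbed_eq_rotate rotate_def erm_eq_erm_of_sample[symmetric])
  qed
  show ?thesis
  proof (rule mutual_info_eq_infinity_of_graph[where g = "erm_of_sample n" and E = ?E])
    show "emeasure M {\<omega> \<in> space M. erm_of_sample n (sample Z n \<omega>) = w} = 0" for w
      using emeasure_erm_eq[of w] by (simp add: erm_eq_erm_of_sample)
  qed (fact borel_measurable_perturbed measurable_sample borel_measurable_erm_of_sample E E_pos on_E)+
qed

end

theorem mainTheorem8:
  fixes M :: "'a measure" and Z :: "nat \<Rightarrow> 'a \<Rightarrow> real \<times> real" and \<xi> :: "'a \<Rightarrow> real"
    and n :: nat and \<epsilon> :: real
  assumes "prob_space M"
    and "n \<ge> 1"
    and "\<forall>i<n. Z i \<in> borel_measurable M \<and> distr M borel (Z i) = mu2"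
    and "prob_space.indep_vars M (\<lambda>_. borel) Z {..<n}"
    and "\<xi> \<in> borel_measurable M"
    and "distr M (sample_space n \<Otimes>\<^sub>M borel) (\<lambda>\<omega>. (sample Z n \<omega>, \<xi> \<omega>))
           = distr M (sample_space n) (sample Z n) \<Otimes>\<^sub>M distr M borel \<xi>"
    and "0 \<le> \<epsilon>" and "\<epsilon> \<le> 1"
    and "\<forall>A \<in> sets borel. measure M {\<omega> \<in> space M. \<xi> \<omega> \<in> A}
           = \<epsilon> * indicator A 0 + (1 - \<epsilon>) * measure lborel (A \<inter> {-pi<..<pi}) / (2 * pi)"
  shows "gen M n (sample Z n) (erm Z n) = sqrt (pi / (2 * real n))
    \<and> gen M n (sample Z n) (perturbed Z n \<xi>) = \<epsilon> * sqrt (pi / (2 * real n))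
    \<and> mutual_info M borel (erm Z n) (sample_space n) (sample Z n) = \<infinity>
    \<and> (0 < \<epsilon> \<and> \<epsilon> < 1 \<longrightarrow> mutual_info M borel (perturbed Z n \<xi>) (sample_space n) (sample Z n) = \<infinity>)"
proof -
  interpret perturbed_sample M Z n \<xi> \<epsilon>
    using assms(1-6,8,9)
    unfolding perturbed_sample_def perturbed_sample_axioms_def gaussian_sample_def gaussian_sample_axioms_def
    by blast
  show ?thesis
    using gen_erm gen_perturbed mutual_info_erm mutual_info_perturbed by blast
qed

end
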